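(* Let $\mathcal{N}$ be a two-level PT-net system with transitions partitioned into low-level $L$ and high-level $H$. For any high-level net system $\mathcal{N}'$ (with places disjoint from those of $\mathcal{N}$) whose set of transitions $H'$ does not intersect $L$, $\mathcal{N}\setminus H$ is weakly simulated by $(\mathcal{N}|\mathcal{N}')\setminus(H\setminus H')$, which in turn is weakly simulated by $\mathcal{N}$, where all these net systems have the same set of observable transitions $L$.
   Context: A PT-net is $N=(P,T,F)$ with $P,T$ finite disjoint and $F:(P\times T)\cup(T\times P)\to\mathbb{N}$; markings $M:P\to\mathbb{N}$; $t$ enabled at $M$ ($M[t\rangle$) iff $M(p)\ge F(p,t)$ for all $p$, firing gives $M'(p)=M(p)+F(t,p)-F(p,t)$. A PT-net system is $(N,M_0)$. $\mathcal{N}\setminus T'$ deletes the transitions of $T'$ (same places, same initial marking). For systems $\mathcal{N}_1,\mathcal{N}_2$ with disjoint place sets, $\mathcal{N}_1|\mathcal{N}_2$ has the union of places, the union of transitions (a shared transition is a single transition whose arcs to/from places of $\mathcal{N}_i$ are those of $\mathcal{N}_i$), and the union of initial markings. A high-level net system has only high-level transitions. Transitions in $L$ are observable, all others unobservable. A system $\mathcal{A}$ is weakly simulated by $\mathcal{B}$ if there is a relation $R$ between reachable markings of $\mathcal{A}$ and $\mathcal{B}$ containing the pair of initial markings such that for $(M_1,M_1')\in R$: if $M_1[l\rangle M_2$ with $l$ observable, then $M_1'$ reaches by a sequence of unobservable transitions, then $l$, then unobservable transitions, some $M_2'$ with $(M_2,M_2')\in R$; if $M_1[h\rangle M_2$ with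 $h$ unobservable, then $M_1'$ reaches by unobservable transitions some $M_2'$ with $(M_2,M_2')\in R$. *)

theory Defs
  imports Main
begin

text \<open>PT-net systems. Places have type 'p, transitions type 't (so P and T are disjoint).
  The flow function F is split into pre (F(p,t)) and post (F(t,p)).\<close>

record ('p, 't) ptnet =
  places :: "'p set"
  trans  :: "'t set"
  pre    :: "'p \<Rightarrow> 't \<Rightarrow> nat"
  post   :: "'t \<Rightarrow> 'p \<Rightarrow> nat"
  init   :: "'p \<Rightarrow> nat"

type_synonym 'p marking = "'p \<Rightarrow> nat"

definition wf_net :: "('p, 't) ptnet \<Rightarrow> bool" where
  "wf_net N \<longleftrightarrow> finite (places N) \<and> finite (trans N)
     \<and> (\<forall>p t. pre N p t \<noteq> 0 \<longrightarrow> p \<in> places N \<and> t \<in> trans N)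
     \<and> (\<forall>p t. post N t p \<noteq> 0 \<longrightarrow> p \<in> places N \<and> t \<in> trans N)
     \<and> (\<forall>p. init N p \<noteq> 0 \<longrightarrow> p \<in> places N)"

definition enabled :: "('p, 't) ptnet \<Rightarrow> 'p marking \<Rightarrow> 't \<Rightarrow> bool" where
  "enabled N M t \<longleftrightarrow> t \<in> trans N \<and> (\<forall>p. pre N p t \<le> M p)"

definition fire :: "('p, 't) ptnet \<Rightarrow> 'p marking \<Rightarrow> 't \<Rightarrow> 'p marking" where
  "fire N M t = (\<lambda>p. M p + post N t p - pre N p t)"

inductive_set reach :: "('p, 't) ptnet \<Rightarrow> 'p marking set" for N where
  init: "init N \<in> reach N"
| step: "M \<in> reach N \<Longrightarrow> enabled N M t \<Longrightarrow> fire N M t \<in> reach N"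

definition delete :: "('p, 't) ptnet \<Rightarrow> 't set \<Rightarrow> ('p, 't) ptnet" where
  "delete N T' = \<lparr> places = places N, trans = trans N - T',
     pre = (\<lambda>p t. if t \<in> T' then 0 else pre N p t),
     post = (\<lambda>t p. if t \<in> T' then 0 else post N t p),
     init = init N \<rparr>"

text \<open>Composition N1 | N2 (place sets assumed disjoint): shared transitions are merged,
  arcs to/from places of Ni are those of Ni.\<close>
definition compose :: "('p, 't) ptnet \<Rightarrow> ('p, 't) ptnet \<Rightarrow> ('p, 't) ptnet" where
  "compose N1 N2 = \<lparr> places = places N1 \<union> places N2, trans = trans N1 \<union> trans N2,
     pre = (\<lambda>p t. if p \<in> places N1 then pre N1 p t
                   else if p \<in> places N2 then pre N2 p t else 0),
     post = (\<lambda>t p. if p \<in> places N1 then post N1 t p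
                   else if p \<in> places N2 then post N2 t p else 0),
     init = (\<lambda>p. if p \<in> places N1 then init N1 p
                   else if p \<in> places N2 then init N2 p else 0) \<rparr>"

definition tau_steps :: "('p, 't) ptnet \<Rightarrow> 't set \<Rightarrow> 'p marking \<Rightarrow> 'p marking \<Rightarrow> bool" where
  "tau_steps N L = (\<lambda>M M'. \<exists>t. t \<notin> L \<and> enabled N M t \<and> M' = fire N M t)\<^sup>*\<^sup>*"

definition weakly_simulated :: "('p, 't) ptnet \<Rightarrow> ('q, 't) ptnet \<Rightarrow> 't set \<Rightarrow> bool" where
  "weakly_simulated A B L \<longleftrightarrow> (\<exists>R :: 'p marking \<Rightarrow> 'q marking \<Rightarrow> bool.
     R (init A) (init B)
     \<and> (\<forall>M M'. R M M' \<longrightarrow> M \<in> reach A \<and> M' \<in> reach B)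
     \<and> (\<forall>M1 M1' l. R M1 M1' \<longrightarrow> l \<in> L \<longrightarrow> enabled A M1 l \<longrightarrow>
          (\<exists>Ma Mb M2'. tau_steps B L M1' Ma \<and> enabled B Ma l \<and> Mb = fire B Ma l
                        \<and> tau_steps B L Mb M2' \<and> R (fire A M1 l) M2'))
     \<and> (\<forall>M1 M1' h. R M1 M1' \<longrightarrow> h \<notin> L \<longrightarrow> enabled A M1 h \<longrightarrow>
          (\<exists>M2'. tau_steps B L M1' M2' \<and> R (fire A M1 h) M2')))"

end

theory Submission
  imports Defs
begin

text \<open>Both simulations are witnessed by functions on markings. Composing with \<open>N'\<close> and
  deleting only the high-level transitions outside \<open>H'\<close> leaves every low-level transition
  of \<open>N\<close> firing exactly as before, while the places of \<open>N'\<close> can be frozen at their initial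
  marking; hence \<open>N \ H\<close> is simulated by extending its markings with \<open>init N'\<close>. Conversely,
  erasing the places of \<open>N'\<close> maps firings of the composed net to firings of \<open>N\<close> (for
  transitions of \<open>N\<close>) or to no change at all (for transitions of \<open>N'\<close> only, which are
  unobservable). Neither direction needs \<open>L \<inter> H = {}\<close>, and the second holds whatever
  transitions are deleted from the composition.\<close>

lemma reach_tau_steps:
  assumes "tau_steps B L M M'" and "M \<in> reach B"
  shows "M' \<in> reach B"
  using assms unfolding tau_steps_def
  by (induction rule: rtranclp_induct) (auto intro: reach.step)

lemma weakly_simulated_by_abstraction:
  fixes A :: "('p, 't) ptnet" and B :: "('q, 't) ptnet" and g :: "'p marking \<Rightarrow> 'q marking"
  assumes initial: "g (init A) = init B"
    and observable: "\<And>M t. M \<in> reach A \<Longrightarrow> enabled A M t \<Longrightarrow> t \<in> L \<Longrightarrow>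
                       enabled B (g M) t \<and> g (fire A M t) = fire B (g M) t"
    and unobservable: "\<And>M t. M \<in> reach A \<Longrightarrow> enabled A M t \<Longrightarrow> t \<notin> L \<Longrightarrow>
                         tau_steps B L (g M) (g (fire A M t))"
  shows "weakly_simulated A B L"
proof -
  have reach_image: "g M \<in> reach B" if "M \<in> reach A" for M
    using that
  proof (induction rule: reach.induct)
    case init
    then show ?case using initial by (simp add: reach.init)
  next
    case (step M t)
    then show ?case
      using observable[OF step.hyps] unobservable[OF step.hyps]
      by (cases "t \<in> L") (auto intro: reach.step reach_tau_steps)
  qed
  let ?R = "\<lambda>M M'. M \<in> reach A \<and> M' = g M"
  have "?R (init A) (init B)"
    using initial by (simp add: reach.init)
  moreover have "\<forall>M M'. ?R M M' \<longrightarrow> M \<in> reach A \<and> M' \<in> reach B"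
    using reach_image by auto
  moreover have "\<forall>M1 M1' l. ?R M1 M1' \<longrightarrow> l \<in> L \<longrightarrow> enabled A M1 l \<longrightarrow>
      (\<exists>Ma Mb M2'. tau_steps B L M1' Ma \<and> enabled B Ma l \<and> Mb = fire B Ma l
                    \<and> tau_steps B L Mb M2' \<and> ?R (fire A M1 l) M2')"
    using observable by (auto simp: tau_steps_def intro: reach.step)
  moreover have "\<forall>M1 M1' h. ?R M1 M1' \<longrightarrow> h \<notin> L \<longrightarrow> enabled A M1 h \<longrightarrow>
      (\<exists>M2'. tau_steps B L M1' M2' \<and> ?R (fire A M1 h) M2')"
    using unobservable by (auto intro: reach.step)
  ultimately show ?thesis
    unfolding weakly_simulated_def by (intro exI[where x = ?R]) blast
qed

lemma wf_net_pre_eq_0: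
    "wf_net N \<Longrightarrow> p \<notin> places N \<Longrightarrow> pre N p t = 0"
    "wf_net N \<Longrightarrow> t \<notin> trans N \<Longrightarrow> pre N p t = 0"
  and wf_net_post_eq_0:
    "wf_net N \<Longrightarrow> p \<notin> places N \<Longrightarrow> post N t p = 0"
    "wf_net N \<Longrightarrow> t \<notin> trans N \<Longrightarrow> post N t p = 0"
  and wf_net_init_eq_0: "wf_net N \<Longrightarrow> p \<notin> places N \<Longrightarrow> init N p = 0"
  unfolding wf_net_def by blast+

lemma enabled_delete: "enabled (delete N T) M t \<longleftrightarrow> t \<notin> T \<and> enabled N M t"
  by (auto simp: enabled_def delete_def)

lemma fire_delete: "t \<notin> T \<Longrightarrow> fire (delete N T) M t = fire N M t"
  by (simp add: fire_def delete_def)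

lemma trans_delete: "trans (delete N T) = trans N - T"
  by (simp add: delete_def)

lemma init_delete: "init (delete N T) = init N"
  by (simp add: delete_def)

lemma trans_compose: "trans (compose N N') = trans N \<union> trans N'"
  by (simp add: compose_def)

context
  fixes N N' :: "('p, 't) ptnet"
  assumes wf: "wf_net N" and disjoint: "places N \<inter> places N' = {}"
begin

lemma notin_places_if_in_places': "p \<in> places N' \<Longrightarrow> p \<notin> places N"
  using disjoint by blast

lemma pre_compose: "pre (compose N N') p t = (if p \<in> places N' then pre N' p t else pre N p t)"
  and post_compose: "post (compose N N') t p = (if p \<in> places N' then post N' t p else post N t p)"
  and init_compose: "init (compose N N') p = (if p \<in> places N' then init N' p else init N p)"
  by (auto simp: compose_def wf_net_pre_eq_0 wf_net_post_eq_0 wf_net_init_eq_0 wf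
      notin_places_if_in_places')

lemma init_compose_override: "init (compose N N') = override_on (init N) (init N') (places N')"
  by (simp add: fun_eq_iff init_compose override_on_def)

lemma init_compose_erase: "override_on (init (compose N N')) (\<lambda>_. 0) (places N') = init N"
  by (auto simp: fun_eq_iff init_compose override_on_def wf_net_init_eq_0 wf
      notin_places_if_in_places')

lemma enabled_compose_override:
  assumes "wf_net N'" and "t \<notin> trans N'" and "enabled N M t"
  shows "enabled (compose N N') (override_on M M' (places N')) t"
  using assms
  by (auto simp: enabled_def compose_def pre_compose wf_net_pre_eq_0 notin_places_if_in_places')

lemma fire_compose_override:
  assumes "wf_net N'" and "t \<notin> trans N'"
  shows "fire (compose N N') (override_on M M' (places N')) t = override_on (fire N M t) M' (places N')"
  using assms
  by (auto simp: fun_eq_iff fire_def override_on_def pre_compose post_compose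
      wf_net_pre_eq_0 wf_net_post_eq_0)

lemma enabled_compose_erase:
  assumes "enabled (compose N N') M t" and "t \<in> trans N"
  shows "enabled N (override_on M (\<lambda>_. 0) (places N')) t"
proof -
  have "pre N p t \<le> override_on M (\<lambda>_. 0) (places N') p" for p
    using assms(1) unfolding enabled_def
    by (cases "p \<in> places N'")
      (auto simp: pre_compose wf_net_pre_eq_0 wf notin_places_if_in_places' dest: spec[of _ p])
  then show ?thesis
    using assms(2) by (simp add: enabled_def)
qed

lemma fire_compose_erase:
  "override_on (fire (compose N N') M t) (\<lambda>_. 0) (places N') =
     (if t \<in> trans N then fire N (override_on M (\<lambda>_. 0) (places N')) t
      else override_on M (\<lambda>_. 0) (places N'))"
  by (auto simp: fun_eq_iff fire_def override_on_def pre_compose post_compose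
      wf_net_pre_eq_0 wf_net_post_eq_0 wf notin_places_if_in_places')

lemma weakly_simulated_delete_by_delete_compose:
  assumes "wf_net N'" and "trans N - H \<subseteq> L" and "trans N' \<inter> L = {}" and "T \<subseteq> H"
  shows "weakly_simulated (delete N H) (delete (compose N N') T) L"
proof (rule weakly_simulated_by_abstraction[where g = "\<lambda>M. override_on M (init N') (places N')"])
  show "override_on (init (delete N H)) (init N') (places N') = init (delete (compose N N') T)"
    by (simp add: init_delete init_compose_override)
next
  fix M t
  assume "enabled (delete N H) M t" and "t \<in> L"
  then have "enabled N M t" and "t \<notin> T" and "t \<notin> trans N'"
    using assms(3,4) by (auto simp: enabled_delete)
  then show "enabled (delete (compose N N') T) (override_on M (init N') (places N')) t \<and>
      override_on (fire (delete N H) M t) (init N') (places N') =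
      fire (delete (compose N N') T) (override_on M (init N') (places N')) t"
    using \<open>enabled (delete N H) M t\<close> assms(1)
    by (simp add: enabled_delete fire_delete enabled_compose_override fire_compose_override)
next
  fix M t
  assume "enabled (delete N H) M t" and "t \<notin> L"
  then have False
    using assms(2) by (auto simp: enabled_def trans_delete)
  then show "tau_steps (delete (compose N N') T) L (override_on M (init N') (places N'))
      (override_on (fire (delete N H) M t) (init N') (places N'))" ..
qed

lemma weakly_simulated_delete_compose_by_net:
  assumes "trans N' \<inter> L = {}"
  shows "weakly_simulated (delete (compose N N') T) N L"
proof (rule weakly_simulated_by_abstraction[where g = "\<lambda>M. override_on M (\<lambda>_. 0) (places N')"])
  show "override_on (init (delete (compose N N') T)) (\<lambda>_. 0) (places N') = init N"
    by (simp add: init_delete init_compose_erase)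
next
  fix M t
  assume "enabled (delete (compose N N') T) M t" and "t \<in> L"
  then have "enabled (compose N N') M t" and "t \<notin> T"
    by (simp_all add: enabled_delete)
  moreover have "t \<in> trans N"
    using \<open>enabled (compose N N') M t\<close> \<open>t \<in> L\<close> assms
    by (auto simp: enabled_def trans_compose)
  ultimately show "enabled N (override_on M (\<lambda>_. 0) (places N')) t \<and>
      override_on (fire (delete (compose N N') T) M t) (\<lambda>_. 0) (places N') =
      fire N (override_on M (\<lambda>_. 0) (places N')) t"
    by (simp add: fire_delete fire_compose_erase enabled_compose_erase)
next
  fix M t
  assume "enabled (delete (compose N N') T) M t" and "t \<notin> L"
  then have en: "enabled (compose N N') M t" and "t \<notin> T"
    by (simp_all add: enabled_delete)
  show "tau_steps N L (override_on M (\<lambda>_. 0) (places N'))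
      (override_on (fire (delete (compose N N') T) M t) (\<lambda>_. 0) (places N'))"
  proof (cases "t \<in> trans N")
    case True
    then show ?thesis
      using en \<open>t \<notin> T\<close> \<open>t \<notin> L\<close> unfolding tau_steps_def
      by (intro r_into_rtranclp)
        (auto simp: fire_delete fire_compose_erase intro!: enabled_compose_erase)
  next
    case False
    then show ?thesis
      using \<open>t \<notin> T\<close> by (simp add: tau_steps_def fire_delete fire_compose_erase)
  qed
qed

end

theorem proposition2:
  fixes N N' :: "('p, 't) ptnet" and L H H' :: "'t set"
  assumes "wf_net N" and "wf_net N'"
    and "trans N = L \<union> H" and "L \<inter> H = {}"
    and "trans N' = H'" and "H' \<inter> L = {}"
    and "places N \<inter> places N' = {}"
  shows "weakly_simulated (delete N H) (delete (compose N N') (H - H')) L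
       \<and> weakly_simulated (delete (compose N N') (H - H')) N L"
proof -
  have "trans N - H \<subseteq> L" and "trans N' \<inter> L = {}" and "H - H' \<subseteq> H"
    using assms(3,5,6) by auto
  then show ?thesis
    using weakly_simulated_delete_by_delete_compose[OF assms(1,7,2)]
      weakly_simulated_delete_compose_by_net[OF assms(1,7)]
    by simp
qed

end
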